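(* For all real numbers $a,b,c>0$, \[ \frac{2a}{\sqrt{2a^2+b^2+c^2}}+\frac{2b}{\sqrt{2b^2+c^2+a^2}}+\frac{2c}{\sqrt{2c^2+a^2+b^2}}\leq \frac{3\sqrt{2}\,(a+b+c)}{\sqrt{5a^2+5b^2+5c^2+ab+bc+ca}}. \] *)

theory Defs
  imports Complex_Main
begin

end

theory Submission
  imports Defs
begin

text \<open>By Cauchy--Schwarz with weights \<open>a, b, c\<close>, the square of the left-hand side is at most
  \<open>(a + b + c) (4a/A + 4b/B + 4c/C)\<close>, where \<open>A, B, C\<close> are the three radicands. It remains to show
  the rational inequality \<open>a/A + b/B + c/C \<le> 9(a + b + c)/(2M)\<close>, \<open>M\<close> the right-hand radicand.
  Cleared of denominators, it becomes a symmetric octic in \<open>p = a + b + c\<close>, \<open>q = ab + bc + ca\<close>,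
  \<open>r = abc\<close>; in the variables \<open>t = p\<^sup>2 - 3q\<close> and \<open>X = q\<^sup>2 - 3pr\<close> it is \<open>9X\<^sup>2\<close> plus a
  function affine in \<open>X\<close> with coefficients in \<open>t, q \<ge> 0\<close> that is nonnegative at both ends of the
  range \<open>0 \<le> X \<le> q\<^sup>2\<close>.\<close>

lemma three_sum_products_le_square_sum:
  fixes x y z :: real
  shows "3 * (x*y + y*z + z*x) \<le> (x + y + z)^2"
proof -
  have "(x + y + z)^2 - 3 * (x*y + y*z + z*x) = ((x - y)^2 + (y - z)^2 + (z - x)^2) / 2"
    by algebra
  moreover have "0 \<le> ((x - y)^2 + (y - z)^2 + (z - x)^2) / 2"
    by simp
  ultimately show ?thesis
    by linarith
qed

lemma pqr_form_nonneg:
  fixes t q X :: real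
  assumes "t \<ge> 0" and "q \<ge> 0" and "X \<ge> 0" and "X \<le> q^2"
  shows "0 \<le> 72*t^4 + 324*q*t^3 + 423*q^2*t^2 + 168*q^3*t + X * (48*t*q + 72*q^2 - 36*t^2) + 9*X^2"
    (is "0 \<le> ?P + X * ?K + 9*X^2")
proof (cases "?K \<ge> 0")
  case True
  have "0 \<le> ?P"
    using assms by (intro add_nonneg_nonneg mult_nonneg_nonneg) auto
  then show ?thesis
    using True \<open>X \<ge> 0\<close> by simp
next
  case False
  have "?P + q^2 * ?K = 72*t^4 + 324*q*t^3 + 387*q^2*t^2 + 216*q^3*t + 72*q^4"
    by algebra
  also have "0 \<le> \<dots>"
    using assms by (intro add_nonneg_nonneg mult_nonneg_nonneg) auto
  finally have "0 \<le> ?P + q^2 * ?K" .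
  moreover have "q^2 * ?K \<le> X * ?K"
    using False \<open>X \<le> q^2\<close> by (intro mult_right_mono_neg) auto
  ultimately show ?thesis
    by (smt (verit) zero_le_power2)
qed

lemma weighted_reciprocal_sum_le:
  fixes a b c :: real
  assumes "a > 0" and "b > 0" and "c > 0"
  shows "a / (2*a^2 + b^2 + c^2) + b / (2*b^2 + c^2 + a^2) + c / (2*c^2 + a^2 + b^2)
         \<le> 9 * (a + b + c) / (2 * (5*a^2 + 5*b^2 + 5*c^2 + a*b + b*c + c*a))"
proof -
  define A where "A = 2*a^2 + b^2 + c^2"
  define B where "B = 2*b^2 + c^2 + a^2"
  define C where "C = 2*c^2 + a^2 + b^2"
  define M where "M = 5*a^2 + 5*b^2 + 5*c^2 + a*b + b*c + c*a"
  define p where "p = a + b + c"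
  define q where "q = a*b + b*c + c*a"
  define r where "r = a*b*c"
  define t where "t = p^2 - 3*q"
  define X where "X = q^2 - 3*p*r"
  have pos: "A > 0" "B > 0" "C > 0" "M > 0" "p > 0"
    using assms by (auto simp: A_def B_def C_def M_def p_def intro!: add_pos_pos add_pos_nonneg)
  have "t \<ge> 0"
    using three_sum_products_le_square_sum[of a b c] by (simp add: t_def p_def q_def)
  moreover have "q \<ge> 0"
    using assms by (simp add: q_def)
  moreover have "X \<ge> 0"
    using three_sum_products_le_square_sum[of "a*b" "b*c" "c*a"]
    by (simp add: X_def p_def q_def r_def algebra_simps power2_eq_square)
  moreover have "X \<le> q^2"
    using assms pos by (simp add: X_def r_def)
  ultimately have "0 \<le> 72*t^4 + 324*q*t^3 + 423*q^2*t^2 + 168*q^3*t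
                      + X * (48*t*q + 72*q^2 - 36*t^2) + 9*X^2"
    by (rule pqr_form_nonneg)
  also have "\<dots> = 9*p * (9*p * (A*B*C) - 2*M * (a*B*C + b*A*C + c*A*B))"
    unfolding A_def B_def C_def M_def p_def q_def r_def t_def X_def by algebra
  finally have "2*M * (a*B*C + b*A*C + c*A*B) \<le> 9*p * (A*B*C)"
    using pos by (simp add: zero_le_mult_iff)
  then have "a/A + b/B + c/C \<le> 9*p / (2*M)"
    using pos by (simp add: field_simps mult.commute mult.left_commute)
  then show ?thesis
    by (simp add: A_def B_def C_def M_def p_def)
qed

lemma cauchy_schwarz_engel3:
  fixes x1 x2 x3 u1 u2 u3 :: real
  assumes "x1 > 0" and "x2 > 0" and "x3 > 0"
  shows "(u1 + u2 + u3)^2 \<le> (x1 + x2 + x3) * (u1^2/x1 + u2^2/x2 + u3^2/x3)"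
proof -
  define v1 where "v1 = u1/x1"
  define v2 where "v2 = u2/x2"
  define v3 where "v3 = u3/x3"
  have u: "u1 = x1*v1" "u2 = x2*v2" "u3 = x3*v3"
    using assms by (auto simp: v1_def v2_def v3_def)
  have "(x1 + x2 + x3) * (x1*v1^2 + x2*v2^2 + x3*v3^2) - (x1*v1 + x2*v2 + x3*v3)^2
          = x1*x2*(v1 - v2)^2 + x1*x3*(v1 - v3)^2 + x2*x3*(v2 - v3)^2"
    by algebra
  moreover have "0 \<le> x1*x2*(v1 - v2)^2 + x1*x3*(v1 - v3)^2 + x2*x3*(v2 - v3)^2"
    using assms by (intro add_nonneg_nonneg mult_nonneg_nonneg) auto
  ultimately have "(x1*v1 + x2*v2 + x3*v3)^2 \<le> (x1 + x2 + x3) * (x1*v1^2 + x2*v2^2 + x3*v3^2)"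
    by linarith
  moreover have "u1^2/x1 = x1*v1^2" "u2^2/x2 = x2*v2^2" "u3^2/x3 = x3*v3^2"
    using assms by (auto simp: u power2_eq_square)
  ultimately show ?thesis
    by (simp add: u)
qed

theorem mainTheorem4:
  fixes a b c :: real
  assumes "a > 0" and "b > 0" and "c > 0"
  shows "2*a / sqrt (2*a^2 + b^2 + c^2) + 2*b / sqrt (2*b^2 + c^2 + a^2)
           + 2*c / sqrt (2*c^2 + a^2 + b^2)
         \<le> 3 * sqrt 2 * (a + b + c) / sqrt (5*a^2 + 5*b^2 + 5*c^2 + a*b + b*c + c*a)"
proof -
  define A where "A = 2*a^2 + b^2 + c^2"
  define B where "B = 2*b^2 + c^2 + a^2"
  define C where "C = 2*c^2 + a^2 + b^2"
  define M where "M = 5*a^2 + 5*b^2 + 5*c^2 + a*b + b*c + c*a"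
  define p where "p = a + b + c"
  have pos: "A > 0" "B > 0" "C > 0" "M > 0"
    using assms by (auto simp: A_def B_def C_def M_def intro!: add_pos_pos add_pos_nonneg)
  have "sqrt M > 0"
    using pos by simp
  have squares: "(2*a / sqrt A)^2 / a = 4*a/A" "(2*b / sqrt B)^2 / b = 4*b/B"
    "(2*c / sqrt C)^2 / c = 4*c/C"
    using pos assms by (auto simp: power_divide power_mult_distrib power2_eq_square)
  have "(2*a / sqrt A + 2*b / sqrt B + 2*c / sqrt C)^2 \<le> p * (4*a/A + 4*b/B + 4*c/C)"
    using cauchy_schwarz_engel3[OF assms, of "2*a / sqrt A" "2*b / sqrt B" "2*c / sqrt C"] squares by (simp add: p_def)
  also have "\<dots> \<le> p * (18*p / M)"
  proof -
    have "a/A + b/B + c/C \<le> 9*p / (2*M)"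
      using weighted_reciprocal_sum_le[OF assms] unfolding A_def B_def C_def M_def p_def .
    moreover have "4*a/A + 4*b/B + 4*c/C = 4 * (a/A + b/B + c/C)" "18*p / M = 4 * (9*p / (2*M))"
      by simp_all
    ultimately have "4*a/A + 4*b/B + 4*c/C \<le> 18*p / M"
      by linarith
    moreover have "p > 0"
      using assms by (simp add: p_def)
    ultimately show ?thesis
      by (intro mult_left_mono) auto
  qed
  also have "\<dots> = (3 * sqrt 2 * p / sqrt M)^2"
    using pos by (simp add: power_divide power_mult_distrib power2_eq_square)
  finally have "2*a / sqrt A + 2*b / sqrt B + 2*c / sqrt C \<le> 3 * sqrt 2 * p / sqrt M"
    by (rule power2_le_imp_le) (use assms \<open>sqrt M > 0\<close> in \<open>simp add: p_def\<close>)
  then show ?thesis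
    by (simp only: A_def B_def C_def M_def p_def)
qed

end
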